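(* Let $B\in\mathbb R^{n\times m}$, $f:\mathbb R^m\to\mathbb R$, $h:\mathbb R^n\to\mathbb R$ differentiable, and $\mathcal I_{\mathcal V}$, $\mathcal I_{\mathcal Q}$ symmetric positive definite. Let $e(u)=u-\mathcal I_{\mathcal V}^{-1}\nabla f(u)$, $h_B(p)=h(p)+\frac12(B\mathcal I_{\mathcal V}^{-1}B^\top p,p)$, $\mathcal G^u(u,p)=-\mathcal I_{\mathcal V}^{-1}(\nabla f(u)+B^\top p)$, $\mathcal G^p(u,p)=-\mathcal I_{\mathcal Q}^{-1}(\nabla h_B(p)-Be(u))$. Assume $\nabla f$ and $\nabla h_B$ are Lipschitz continuous with constants $L_{f,\mathcal I_{\mathcal V}}$ and $L_{h_B,\mathcal I_{\mathcal Q}}$, i.e. $\|\nabla f(u_1)-\nabla f(u_2)\|_{\mathcal I_{\mathcal V}^{-1}}\le L_{f,\mathcal I_{\mathcal V}}\|u_1-u_2\|_{\mathcal I_{\mathcal V}}$ and $\|\nabla h_B(p_1)-\nabla h_B(p_2)\|_{\mathcal I_{\mathcal Q}^{-1}}\le L_{h_B,\mathcal I_{\mathcal Q}}\|p_1-p_2\|_{\mathcal I_{\mathcal Q}}$, and let $L_{e,\mathcal I_{\mathcal V}}$ be the Lipschitz constant of $e$ with respect to $\|\cdot\|_{\mathcal I_{\mathcal V}}$. Then for all $u_1,u_2\in\mathbb R^m$, $p_1,p_2\in\mathbb R^n$, with $v_i=u_i+\mathcal I_{\mathcal V}^{-1}B^\top p_i$, $$\|\mathcal G^u(u_1,p_1)-\mathcal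 G^u(u_2,p_2)\|_{\mathcal I_{\mathcal V}}\le L_{e,\mathcal I_{\mathcal V}}\|u_1-u_2\|_{\mathcal I_{\mathcal V}}+\|v_1-v_2\|_{\mathcal I_{\mathcal V}},$$ $$\|\mathcal G^p(u_1,p_1)-\mathcal G^p(u_2,p_2)\|_{\mathcal I_{\mathcal Q}}\le L_{e,\mathcal I_{\mathcal V}}L_S\|u_1-u_2\|_{\mathcal I_{\mathcal V}}+L_{h_B,\mathcal I_{\mathcal Q}}\|p_1-p_2\|_{\mathcal I_{\mathcal Q}},$$ where $L_S^2=\lambda_{\max}(\mathcal I_{\mathcal Q}^{-1}B\mathcal I_{\mathcal V}^{-1}B^\top)$.
   Context: For SPD $M$, $\|x\|_M=(Mx,x)^{1/2}$. *)

theory Defs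
  imports "HOL-Analysis.Analysis"
begin

definition spd :: "real^'n^'n \<Rightarrow> bool" where
  "spd M \<longleftrightarrow> transpose M = M \<and> (\<forall>x. x \<noteq> 0 \<longrightarrow> (M *v x) \<bullet> x > 0)"

definition mnorm :: "real^'n^'n \<Rightarrow> real^'n \<Rightarrow> real" where
  "mnorm M x = sqrt ((M *v x) \<bullet> x)"

definition grad :: "(real^'n \<Rightarrow> real) \<Rightarrow> real^'n \<Rightarrow> real^'n" where
  "grad f x = (SOME g. (f has_derivative (\<lambda>h. g \<bullet> h)) (at x))"

definition real_eigenvalue :: "real^'n^'n \<Rightarrow> real \<Rightarrow> bool" where
  "real_eigenvalue A l \<longleftrightarrow> (\<exists>v. v \<noteq> 0 \<and> A *v v = l *\<^sub>R v)"

definition lambda_max :: "real^'n^'n \<Rightarrow> real" where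
  "lambda_max A = Max {l. real_eigenvalue A l}"

end

theory Submission
  imports Defs
begin

text \<open>
  With v = u + IV^-1 B^T p one has Gu(u,p) = e(u) - v, and the u-dependent part of Gp(u,p) is
  IQ^-1 B e(u). Hence both estimates follow from the triangle inequality for the energy norms
  once we know the operator bound |IQ^-1 B w|_IQ \<le> LS |w|_IV. Its square compares the quadratic
  forms (B^T IQ^-1 B w, w) and (IV w, w). The maximum \<mu> of their quotient over the unit sphere is
  attained at some w0, and Cauchy-Schwarz for the positive semidefinite form \<mu> IV - B^T IQ^-1 B,
  which vanishes at w0, makes w0 a generalized eigenvector: B^T IQ^-1 B w0 = \<mu> IV w0.
  So \<mu> is an eigenvalue of (IV^-1 B^T)(IQ^-1 B) and, since XY and YX have the same nonzero
  eigenvalues, of IQ^-1 B IV^-1 B^T; thus \<mu> \<le> LS^2.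
\<close>

lemma inner_matrix_vector_transpose:
  "((A::real^'n^'m) *v x) \<bullet> y = x \<bullet> (transpose A *v y)"
  by (metis dot_lmul_matrix inner_commute transpose_matrix_vector)

lemma symmetric_matrix_inner_commute:
  "transpose A = A \<Longrightarrow> ((A::real^'n^'n) *v x) \<bullet> y = (A *v y) \<bullet> x"
  by (metis inner_matrix_vector_transpose inner_commute)

lemma quadratic_nonneg_imp_discriminant_le:
  fixes a b c :: real
  assumes "0 \<le> c" and nonneg: "\<And>t. 0 \<le> a + 2*b*t + c*t^2"
  shows "b^2 \<le> a*c"
proof (cases "c = 0")
  case True
  have "b = 0"
  proof (rule ccontr)
    assume "b \<noteq> 0"
    with True nonneg[of "-(a+1)/(2*b)"] show False by (simp add: field_simps)
  qed
  with True show ?thesis by simp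
next
  case False
  with \<open>0 \<le> c\<close> have "0 < c" by simp
  have "0 \<le> a + 2*b*(-b/c) + c*(-b/c)^2" by (rule nonneg)
  also have "\<dots> = a - b^2/c" using \<open>0 < c\<close> by (simp add: field_simps power2_eq_square)
  finally show ?thesis using \<open>0 < c\<close> by (simp add: field_simps)
qed

lemma psd_cauchy_schwarz:
  fixes S :: "real^'n^'n"
  assumes sym: "transpose S = S" and psd: "\<And>z. 0 \<le> (S *v z) \<bullet> z"
  shows "((S *v x) \<bullet> y)^2 \<le> ((S *v x) \<bullet> x) * ((S *v y) \<bullet> y)"
proof (rule quadratic_nonneg_imp_discriminant_le[OF psd])
  fix t
  have "0 \<le> (S *v (x + t *\<^sub>R y)) \<bullet> (x + t *\<^sub>R y)" by (rule psd)
  also have "\<dots> = (S *v x) \<bullet> x + t*((S *v x) \<bullet> y) + t*((S *v y) \<bullet> x) + t*t*((S *v y) \<bullet> y)"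
    by (simp add: algebra_simps inner_add_left inner_add_right)
  also have "\<dots> = (S *v x) \<bullet> x + 2*((S *v x) \<bullet> y)*t + ((S *v y) \<bullet> y)*t^2"
    using symmetric_matrix_inner_commute[OF sym, of y x] by (simp add: power2_eq_square algebra_simps)
  finally show "0 \<le> (S *v x) \<bullet> x + 2*((S *v x) \<bullet> y)*t + ((S *v y) \<bullet> y)*t^2" .
qed

lemma psd_quadratic_form_eq_0_imp:
  fixes S :: "real^'n^'n"
  assumes "transpose S = S" and "\<And>z. 0 \<le> (S *v z) \<bullet> z" and "(S *v w) \<bullet> w = 0"
  shows "S *v w = 0"
  using psd_cauchy_schwarz[OF assms(1,2), of w "S *v w"] assms(3) by simp

lemma spd_quadratic_form_nonneg: "spd M \<Longrightarrow> 0 \<le> (M *v z) \<bullet> z"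
  unfolding spd_def by (cases "z = 0") (auto intro: less_imp_le)

lemma spd_quadratic_form_pos: "spd M \<Longrightarrow> z \<noteq> 0 \<Longrightarrow> 0 < (M *v z) \<bullet> z"
  unfolding spd_def by blast

lemma matrix_vector_mult_uminus_right: "(A::real^'n^'m) *v (- x) = - (A *v x)"
  by (metis diff_0 matrix_vector_mult_diff_distrib matrix_vector_mult_0_right)

lemma mnorm_minus: "mnorm M (- x) = mnorm M x"
  unfolding mnorm_def by (simp add: matrix_vector_mult_uminus_right)

lemma mnorm_triangle:
  assumes "spd M"
  shows "mnorm M (x + y) \<le> mnorm M x + mnorm M y"
proof -
  have sym: "transpose M = M" using assms by (simp add: spd_def)
  define a b c where "a = (M *v x) \<bullet> x" and "b = (M *v x) \<bullet> y" and "c = (M *v y) \<bullet> y"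
  have "0 \<le> a" "0 \<le> c" using spd_quadratic_form_nonneg[OF assms] by (auto simp: a_def c_def)
  have "b^2 \<le> a*c"
    unfolding a_def b_def c_def by (rule psd_cauchy_schwarz[OF sym spd_quadratic_form_nonneg[OF assms]])
  then have "b \<le> sqrt a * sqrt c"
    by (metis real_le_rsqrt real_sqrt_mult abs_le_D1 real_sqrt_abs)
  then have "a + 2*b + c \<le> (sqrt a + sqrt c)^2"
    using \<open>0 \<le> a\<close> \<open>0 \<le> c\<close> by (simp add: power2_eq_square algebra_simps)
  moreover have "(M *v (x + y)) \<bullet> (x + y) = a + 2*b + c"
    using symmetric_matrix_inner_commute[OF sym, of y x]
    by (simp add: a_def b_def c_def algebra_simps inner_add_left inner_add_right)
  ultimately show ?thesis
    unfolding mnorm_def a_def c_def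
    by (simp add: \<open>0 \<le> a\<close> \<open>0 \<le> c\<close> real_le_lsqrt flip: a_def c_def)
qed

lemma mnorm_diff_le: "spd M \<Longrightarrow> mnorm M (x - y) \<le> mnorm M x + mnorm M y"
  using mnorm_triangle[of M x "- y"] by (simp add: mnorm_minus)

lemma matrix_inv_right: "invertible (A::'a::field^'n^'n) \<Longrightarrow> A ** matrix_inv A = mat 1"
  and matrix_inv_left: "invertible (A::'a::field^'n^'n) \<Longrightarrow> matrix_inv A ** A = mat 1"
  unfolding invertible_def matrix_inv_def by (metis (mono_tags, lifting) someI_ex)+

lemma spd_invertible: "spd M \<Longrightarrow> invertible M"
  unfolding invertible_left_inverse
  by (rule matrix_left_invertible_ker[THEN iffD2]) (metis spd_quadratic_form_pos inner_zero_left less_irrefl)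

lemma spd_matrix_inv_cancel:
  assumes "spd M"
  shows "M *v (matrix_inv M *v x) = x" and "matrix_inv M *v (M *v x) = x"
  using matrix_inv_right[OF spd_invertible[OF assms]] matrix_inv_left[OF spd_invertible[OF assms]]
  by (simp_all add: matrix_vector_mul_assoc)

lemma spd_matrix_inv:
  assumes "spd M"
  shows "spd (matrix_inv M)"
  unfolding spd_def
proof safe
  let ?N = "matrix_inv M"
  have "transpose M = M" using assms by (simp add: spd_def)
  then have "transpose ?N ** M = mat 1"
    by (metis matrix_inv_right[OF spd_invertible[OF assms]] matrix_transpose_mul transpose_mat)
  then show "transpose ?N = ?N"
    by (metis matrix_inv_right[OF spd_invertible[OF assms]] matrix_mul_assoc matrix_mul_lid matrix_mul_rid)
  fix x :: "real^'a" assume "x \<noteq> 0"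
  then have "?N *v x \<noteq> 0" using spd_matrix_inv_cancel(1)[OF assms, of x] by auto
  then have "0 < (M *v (?N *v x)) \<bullet> (?N *v x)" by (rule spd_quadratic_form_pos[OF assms])
  then show "0 < (?N *v x) \<bullet> x" by (simp add: spd_matrix_inv_cancel(1)[OF assms] inner_commute)
qed

lemma mnorm_matrix_inv: "spd M \<Longrightarrow> mnorm M (matrix_inv M *v x) = mnorm (matrix_inv M) x"
  unfolding mnorm_def by (simp add: spd_matrix_inv_cancel(1) inner_commute)

lemma eigenvector_combination_eq_0:
  fixes A :: "real^'n^'n"
  assumes "finite S" and "\<And>l. l \<in> S \<Longrightarrow> v l \<noteq> 0 \<and> A *v v l = l *\<^sub>R v l"
    and "(\<Sum>l\<in>S. c l *\<^sub>R v l) = 0"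
  shows "\<forall>l\<in>S. c l = 0"
  using assms
proof (induction S arbitrary: c rule: finite_induct)
  case empty
  then show ?case by simp
next
  case (insert a S)
  have "(\<Sum>l\<in>insert a S. (c l * (l - a)) *\<^sub>R v l)
      = A *v (\<Sum>l\<in>insert a S. c l *\<^sub>R v l) - a *\<^sub>R (\<Sum>l\<in>insert a S. c l *\<^sub>R v l)"
    using insert.prems(1)
    by (simp add: vec.sum scaleR_sum_right algebra_simps flip: sum_subtractf)
  then have "(\<Sum>l\<in>S. (c l * (l - a)) *\<^sub>R v l) = 0"
    using insert.hyps insert.prems(2) by simp
  then have "\<forall>l\<in>S. c l * (l - a) = 0"
    using insert.IH[of "\<lambda>l. c l * (l - a)"] insert.prems(1) by auto
  then have "\<forall>l\<in>S. c l = 0"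
    using insert.hyps(2) by auto
  moreover from this have "c a *\<^sub>R v a = 0"
    using insert.hyps insert.prems(2) by simp
  ultimately show ?case
    using insert.prems(1) by simp
qed

lemma finite_real_eigenvalues: "finite {l. real_eigenvalue (A::real^'n^'n) l}"
proof (rule ccontr)
  assume "infinite {l. real_eigenvalue A l}"
  then obtain S where S: "finite S" "card S = DIM(real^'n) + 1" "S \<subseteq> {l. real_eigenvalue A l}"
    using infinite_arbitrarily_large by blast
  define v where "v l = (SOME w. w \<noteq> 0 \<and> A *v w = l *\<^sub>R w)" for l
  have eig: "v l \<noteq> 0 \<and> A *v v l = l *\<^sub>R v l" if "l \<in> S" for l
  proof -
    have "\<exists>w. w \<noteq> 0 \<and> A *v w = l *\<^sub>R w" using S(3) that by (auto simp: real_eigenvalue_def)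
    then show ?thesis unfolding v_def by (rule someI_ex)
  qed
  have "inj_on v S"
  proof (rule inj_onI)
    fix l l' assume "l \<in> S" "l' \<in> S" "v l = v l'"
    then have "l *\<^sub>R v l = l' *\<^sub>R v l" using eig by metis
    then show "l = l'" using eig[OF \<open>l \<in> S\<close>] by simp
  qed
  have "independent (v ` S)"
  proof
    assume "dependent (v ` S)"
    then obtain c where c: "\<exists>w\<in>v ` S. c w \<noteq> 0" "(\<Sum>w\<in>v ` S. c w *\<^sub>R w) = 0"
      using dependent_finite[OF finite_imageI[OF S(1)]] by blast
    have "(\<Sum>l\<in>S. c (v l) *\<^sub>R v l) = 0" using c(2) by (simp add: sum.reindex[OF \<open>inj_on v S\<close>])
    then have "\<forall>l\<in>S. c (v l) = 0" using eigenvector_combination_eq_0[of S v A "\<lambda>l. c (v l)"] S(1) eig by blast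
    with c(1) show False by auto
  qed
  then have "card (v ` S) \<le> DIM(real^'n)" using independent_bound by blast
  with S(2) card_image[OF \<open>inj_on v S\<close>] show False by simp
qed

lemma real_eigenvalue_le_lambda_max: "real_eigenvalue A l \<Longrightarrow> l \<le> lambda_max A"
  unfolding lambda_max_def by (simp add: finite_real_eigenvalues)

lemma real_eigenvalue_mult_commute:
  fixes X :: "real^'m^'n" and Y :: "real^'n^'m"
  assumes "real_eigenvalue (X ** Y) l" and "l \<noteq> 0"
  shows "real_eigenvalue (Y ** X) l"
proof -
  obtain v where v: "v \<noteq> 0" "X *v (Y *v v) = l *\<^sub>R v"
    using assms(1) by (auto simp: real_eigenvalue_def matrix_vector_mul_assoc)
  then have "Y *v v \<noteq> 0" using assms(2) by auto
  moreover have "(Y ** X) *v (Y *v v) = l *\<^sub>R (Y *v v)"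
    by (simp add: v(2) matrix_vector_mult_scaleR flip: matrix_vector_mul_assoc)
  ultimately show ?thesis unfolding real_eigenvalue_def by blast
qed

lemma generalized_rayleigh_max:
  fixes S P :: "real^'n^'n"
  assumes "transpose S = S" and "spd P"
  obtains \<mu> w\<^sub>0 where "w\<^sub>0 \<noteq> 0" and "S *v w\<^sub>0 = \<mu> *\<^sub>R (P *v w\<^sub>0)"
    and "\<And>w. (S *v w) \<bullet> w \<le> \<mu> * ((P *v w) \<bullet> w)"
proof -
  define R where "R w = ((S *v w) \<bullet> w) / ((P *v w) \<bullet> w)" for w
  have "continuous_on (sphere 0 1) R"
    unfolding R_def using spd_quadratic_form_pos[OF assms(2)]
    by (intro continuous_intros) (metis less_irrefl mem_sphere_0 norm_zero zero_neq_one)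
  then obtain w\<^sub>0 where w\<^sub>0: "w\<^sub>0 \<in> sphere 0 1" and max: "\<And>w. w \<in> sphere 0 1 \<Longrightarrow> R w \<le> R w\<^sub>0"
    using continuous_attains_sup[OF compact_sphere _ \<open>continuous_on (sphere 0 1) R\<close>]
    by auto
  have "w\<^sub>0 \<noteq> 0" using w\<^sub>0 by auto
  define \<mu> where "\<mu> = R w\<^sub>0"
  have bound: "(S *v w) \<bullet> w \<le> \<mu> * ((P *v w) \<bullet> w)" for w
  proof (cases "w = 0")
    case False
    define y where "y = (1 / norm w) *\<^sub>R w"
    have "R y = R w"
      by (simp add: R_def y_def matrix_vector_mult_scaleR)
    moreover have "y \<in> sphere 0 1" using False by (simp add: y_def)
    ultimately have "R w \<le> \<mu>" using max \<mu>_def by metis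
    then show ?thesis
      using spd_quadratic_form_pos[OF assms(2) False] by (simp add: R_def field_simps)
  qed simp
  define T where "T = \<mu> *\<^sub>R P - S"
  have T_apply: "T *v x = \<mu> *\<^sub>R (P *v x) - S *v x" for x
    by (simp add: T_def matrix_vector_mult_diff_rdistrib scaleR_matrix_vector_assoc)
  have "transpose T = T"
    using assms by (simp add: T_def spd_def transpose_def vec_eq_iff)
  moreover have "0 \<le> (T *v z) \<bullet> z" for z
    using bound[of z] by (simp add: T_apply inner_diff_left)
  moreover have "(T *v w\<^sub>0) \<bullet> w\<^sub>0 = 0"
    using spd_quadratic_form_pos[OF assms(2) \<open>w\<^sub>0 \<noteq> 0\<close>]
    by (simp add: T_apply inner_diff_left \<mu>_def R_def)
  ultimately have "T *v w\<^sub>0 = 0" by (rule psd_quadratic_form_eq_0_imp)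
  then have "S *v w\<^sub>0 = \<mu> *\<^sub>R (P *v w\<^sub>0)" by (simp add: T_apply)
  then show thesis by (rule that[OF \<open>w\<^sub>0 \<noteq> 0\<close> _ bound])
qed

lemma real_eigenvalue_dominates_quadratic_form:
  fixes B :: "real^'m^'n" and IV :: "real^'m^'m" and IQ :: "real^'n^'n"
  assumes IV: "spd IV" and IQ: "spd IQ"
  obtains \<mu> where "0 \<le> \<mu>" and "real_eigenvalue (matrix_inv IQ ** B ** matrix_inv IV ** transpose B) \<mu>"
    and "\<And>w. (matrix_inv IQ *v (B *v w)) \<bullet> (B *v w) \<le> \<mu> * ((IV *v w) \<bullet> w)"
proof -
  let ?Qi = "matrix_inv IQ" and ?Vi = "matrix_inv IV"
  define S where "S = transpose B ** ?Qi ** B"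
  have Qi: "spd ?Qi" using IQ by (rule spd_matrix_inv)
  have S_apply: "S *v w = transpose B *v (?Qi *v (B *v w))" for w
    by (simp add: S_def flip: matrix_vector_mul_assoc)
  have S_form: "(S *v w) \<bullet> w = (?Qi *v (B *v w)) \<bullet> (B *v w)" for w
    by (simp add: S_apply inner_matrix_vector_transpose inner_commute)
  have "transpose S = S"
    using Qi by (simp add: S_def spd_def matrix_transpose_mul matrix_mul_assoc)
  then obtain \<mu> w\<^sub>0 where "w\<^sub>0 \<noteq> 0" and eig: "S *v w\<^sub>0 = \<mu> *\<^sub>R (IV *v w\<^sub>0)"
    and bound: "\<And>w. (S *v w) \<bullet> w \<le> \<mu> * ((IV *v w) \<bullet> w)"
    using generalized_rayleigh_max[OF _ IV] by blast
  have "0 \<le> (S *v w\<^sub>0) \<bullet> w\<^sub>0"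
    unfolding S_form by (rule spd_quadratic_form_nonneg[OF Qi])
  then have "0 \<le> \<mu>"
    using spd_quadratic_form_pos[OF IV \<open>w\<^sub>0 \<noteq> 0\<close>] by (simp add: eig zero_le_mult_iff)
  moreover have "real_eigenvalue (?Qi ** B ** ?Vi ** transpose B) \<mu>"
  proof (cases "\<mu> = 0")
    case False
    have "(?Vi ** transpose B ** (?Qi ** B)) *v w\<^sub>0 = \<mu> *\<^sub>R w\<^sub>0"
      using eig by (simp add: S_apply spd_matrix_inv_cancel(2)[OF IV] matrix_vector_mult_scaleR
          flip: matrix_vector_mul_assoc)
    then have "real_eigenvalue ((?Vi ** transpose B) ** (?Qi ** B)) \<mu>"
      using \<open>w\<^sub>0 \<noteq> 0\<close> unfolding real_eigenvalue_def by blast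
    then show ?thesis
      using real_eigenvalue_mult_commute False by (fastforce simp: matrix_mul_assoc)
  next
    case True
    have "B *v w = 0" for w
      using bound[of w] spd_quadratic_form_pos[OF Qi, of "B *v w"] True by (force simp: S_form)
    then have "(?Qi ** B ** ?Vi ** transpose B) *v 1 = 0 *\<^sub>R 1"
      by (simp flip: matrix_vector_mul_assoc)
    then show ?thesis
      using True unfolding real_eigenvalue_def by (metis one_neq_zero)
  qed
  moreover have "(?Qi *v (B *v w)) \<bullet> (B *v w) \<le> \<mu> * ((IV *v w) \<bullet> w)" for w
    using bound[of w] by (simp only: S_form)
  ultimately show thesis by (rule that)
qed

lemma lambda_max_nonneg:
  "spd IV \<Longrightarrow> spd IQ \<Longrightarrow> 0 \<le> lambda_max (matrix_inv IQ ** B ** matrix_inv IV ** transpose B)"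
  by (metis real_eigenvalue_dominates_quadratic_form real_eigenvalue_le_lambda_max order_trans)

lemma mnorm_matrix_inv_mult_le:
  fixes B :: "real^'m^'n" and IV :: "real^'m^'m" and IQ :: "real^'n^'n"
  assumes IV: "spd IV" and IQ: "spd IQ"
  shows "mnorm IQ (matrix_inv IQ *v (B *v w))
    \<le> sqrt (lambda_max (matrix_inv IQ ** B ** matrix_inv IV ** transpose B)) * mnorm IV w"
proof -
  obtain \<mu> where eig: "real_eigenvalue (matrix_inv IQ ** B ** matrix_inv IV ** transpose B) \<mu>"
    and bound: "(matrix_inv IQ *v (B *v w)) \<bullet> (B *v w) \<le> \<mu> * ((IV *v w) \<bullet> w)"
    using real_eigenvalue_dominates_quadratic_form[OF IV IQ] by metis
  have "mnorm IQ (matrix_inv IQ *v (B *v w)) = sqrt ((matrix_inv IQ *v (B *v w)) \<bullet> (B *v w))"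
    by (simp add: mnorm_def spd_matrix_inv_cancel(1)[OF IQ] inner_commute)
  also have "\<dots> \<le> sqrt (lambda_max (matrix_inv IQ ** B ** matrix_inv IV ** transpose B) * ((IV *v w) \<bullet> w))"
    using order_trans[OF bound mult_right_mono[OF real_eigenvalue_le_lambda_max[OF eig]
          spd_quadratic_form_nonneg[OF IV]]]
    by simp
  also have "\<dots> = sqrt (lambda_max (matrix_inv IQ ** B ** matrix_inv IV ** transpose B)) * mnorm IV w"
    by (simp add: mnorm_def real_sqrt_mult)
  finally show ?thesis .
qed

text \<open>Only the Lipschitz bounds for e and grad hB enter.\<close>

theorem lemma3p3:
  fixes B :: "real^'m^'n"
    and f :: "real^'m \<Rightarrow> real" and h :: "real^'n \<Rightarrow> real"
    and IV :: "real^'m^'m" and IQ :: "real^'n^'n"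
    and e :: "real^'m \<Rightarrow> real^'m" and hB :: "real^'n \<Rightarrow> real"
    and Gu :: "real^'m \<Rightarrow> real^'n \<Rightarrow> real^'m"
    and Gp :: "real^'m \<Rightarrow> real^'n \<Rightarrow> real^'n"
    and Lf LhB Le LS :: real
  assumes f_diff: "\<And>u. f differentiable (at u)"
    and h_diff: "\<And>p. h differentiable (at p)"
    and IV_spd: "spd IV" and IQ_spd: "spd IQ"
    and e_def: "\<And>u. e u = u - matrix_inv IV *v grad f u"
    and hB_def: "\<And>p. hB p = h p + 1/2 * (((B ** matrix_inv IV ** transpose B) *v p) \<bullet> p)"
    and Gu_def: "\<And>u p. Gu u p = - (matrix_inv IV *v (grad f u + transpose B *v p))"
    and Gp_def: "\<And>u p. Gp u p = - (matrix_inv IQ *v (grad hB p - B *v e u))"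
    and f_lip: "\<And>u1 u2. mnorm (matrix_inv IV) (grad f u1 - grad f u2) \<le> Lf * mnorm IV (u1 - u2)"
    and hB_lip: "\<And>p1 p2. mnorm (matrix_inv IQ) (grad hB p1 - grad hB p2) \<le> LhB * mnorm IQ (p1 - p2)"
    and e_lip: "\<And>u1 u2. mnorm IV (e u1 - e u2) \<le> Le * mnorm IV (u1 - u2)"
    and LS_def: "LS = sqrt (lambda_max (matrix_inv IQ ** B ** matrix_inv IV ** transpose B))"
  shows "\<forall>u1 u2 p1 p2.
           let v1 = u1 + matrix_inv IV *v (transpose B *v p1);
               v2 = u2 + matrix_inv IV *v (transpose B *v p2)
           in mnorm IV (Gu u1 p1 - Gu u2 p2) \<le> Le * mnorm IV (u1 - u2) + mnorm IV (v1 - v2)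
            \<and> mnorm IQ (Gp u1 p1 - Gp u2 p2) \<le> Le * LS * mnorm IV (u1 - u2) + LhB * mnorm IQ (p1 - p2)"
proof (intro allI)
  fix u1 u2 :: "real^'m" and p1 p2 :: "real^'n"
  let ?Qi = "matrix_inv IQ"
  define v1 where "v1 = u1 + matrix_inv IV *v (transpose B *v p1)"
  define v2 where "v2 = u2 + matrix_inv IV *v (transpose B *v p2)"
  have "Gu u1 p1 - Gu u2 p2 = (e u1 - e u2) - (v1 - v2)"
    by (simp add: Gu_def e_def v1_def v2_def matrix_vector_right_distrib algebra_simps)
  then have Gu_bound: "mnorm IV (Gu u1 p1 - Gu u2 p2) \<le> Le * mnorm IV (u1 - u2) + mnorm IV (v1 - v2)"
    using mnorm_diff_le[OF IV_spd, of "e u1 - e u2" "v1 - v2"] e_lip[of u1 u2] by simp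
  have "Gp u1 p1 - Gp u2 p2 = ?Qi *v (B *v (e u1 - e u2)) - ?Qi *v (grad hB p1 - grad hB p2)"
    by (simp add: Gp_def algebra_simps)
  then have "mnorm IQ (Gp u1 p1 - Gp u2 p2)
      \<le> mnorm IQ (?Qi *v (B *v (e u1 - e u2))) + mnorm IQ (?Qi *v (grad hB p1 - grad hB p2))"
    using mnorm_diff_le[OF IQ_spd] by metis
  also have "\<dots> \<le> LS * (Le * mnorm IV (u1 - u2)) + LhB * mnorm IQ (p1 - p2)"
  proof (rule add_mono)
    have "0 \<le> LS" using lambda_max_nonneg[OF IV_spd IQ_spd] by (simp add: LS_def)
    then show "mnorm IQ (?Qi *v (B *v (e u1 - e u2))) \<le> LS * (Le * mnorm IV (u1 - u2))"
      using mnorm_matrix_inv_mult_le[OF IV_spd IQ_spd, of B "e u1 - e u2"] e_lip[of u1 u2]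
      by (simp add: LS_def order_trans mult_left_mono)
    show "mnorm IQ (?Qi *v (grad hB p1 - grad hB p2)) \<le> LhB * mnorm IQ (p1 - p2)"
      using hB_lip[of p1 p2] by (simp add: mnorm_matrix_inv[OF IQ_spd])
  qed
  finally have Gp_bound: "mnorm IQ (Gp u1 p1 - Gp u2 p2) \<le> Le * LS * mnorm IV (u1 - u2) + LhB * mnorm IQ (p1 - p2)"
    by (simp add: mult_ac)
  show "let v1 = u1 + matrix_inv IV *v (transpose B *v p1);
               v2 = u2 + matrix_inv IV *v (transpose B *v p2)
           in mnorm IV (Gu u1 p1 - Gu u2 p2) \<le> Le * mnorm IV (u1 - u2) + mnorm IV (v1 - v2)
            \<and> mnorm IQ (Gp u1 p1 - Gp u2 p2) \<le> Le * LS * mnorm IV (u1 - u2) + LhB * mnorm IQ (p1 - p2)"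
    using Gu_bound Gp_bound by (simp add: v1_def v2_def Let_def)
qed

end
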